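(* Let $A\in\mathbb{R}^{m\times n}$ be semimonotone ($A^{\dagger}\geq 0$) and let $A=U_1-V_1=U_2-V_2$ be two convergent proper nonnegative splittings of different types (one of type I and the other of type II). If $U_1^{\dagger}>U_2^{\dagger}$, then there exists $\alpha$ with $0<\alpha<1$ such that $U_2^{\dagger}\leq\alpha U_1^{\dagger}$, and $\rho(U_1^{\dagger}V_1)<\rho(U_2^{\dagger}V_2)<1$.
   Context: $A^{\dagger}$ denotes the Moore–Penrose inverse and $\rho(\cdot)$ the spectral radius. Inequalities are entrywise; $X>Y$ means every entry of $X-Y$ is positive. A splitting $A=U-V$ is proper if $R(U)=R(A)$ and $N(U)=N(A)$; it is convergent if $\rho(U^{\dagger}V)<1$. A proper splitting is a proper nonnegative splitting of type I if $U^{\dagger}V\geq 0$, and of type II if $VU^{\dagger}\geq 0$. *)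

theory Defs
  imports "Jordan_Normal_Form.Spectral_Radius" "Jordan_Normal_Form.Matrix_Kernel"
begin

definition mat_range :: "real mat \<Rightarrow> real vec set" where
  "mat_range A = {A *\<^sub>v x | x. x \<in> carrier_vec (dim_col A)}"

definition is_MP_inverse :: "real mat \<Rightarrow> real mat \<Rightarrow> bool" where
  "is_MP_inverse A X \<longleftrightarrow> X \<in> carrier_mat (dim_col A) (dim_row A) \<and>
     A * X * A = A \<and> X * A * X = X \<and>
     transpose_mat (A * X) = A * X \<and> transpose_mat (X * A) = X * A"

definition MP_inverse :: "real mat \<Rightarrow> real mat" where
  "MP_inverse A = (THE X. is_MP_inverse A X)"

definition rho :: "real mat \<Rightarrow> real" where
  "rho M = spectral_radius (map_mat complex_of_real M)"

definition mat_nonneg :: "real mat \<Rightarrow> bool" where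
  "mat_nonneg M \<longleftrightarrow> (\<forall>i<dim_row M. \<forall>j<dim_col M. 0 \<le> M $$ (i,j))"

definition mat_le :: "real mat \<Rightarrow> real mat \<Rightarrow> bool" where
  "mat_le X Y \<longleftrightarrow> dim_row X = dim_row Y \<and> dim_col X = dim_col Y \<and>
     (\<forall>i<dim_row X. \<forall>j<dim_col X. X $$ (i,j) \<le> Y $$ (i,j))"

definition mat_gt :: "real mat \<Rightarrow> real mat \<Rightarrow> bool" where
  "mat_gt X Y \<longleftrightarrow> dim_row X = dim_row Y \<and> dim_col X = dim_col Y \<and>
     (\<forall>i<dim_row X. \<forall>j<dim_col X. X $$ (i,j) > Y $$ (i,j))"

definition proper_splitting :: "real mat \<Rightarrow> real mat \<Rightarrow> real mat \<Rightarrow> bool" where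
  "proper_splitting A U V \<longleftrightarrow>
     U \<in> carrier_mat (dim_row A) (dim_col A) \<and> V \<in> carrier_mat (dim_row A) (dim_col A) \<and>
     A = U - V \<and> mat_range U = mat_range A \<and> mat_kernel U = mat_kernel A"

definition convergent_splitting :: "real mat \<Rightarrow> real mat \<Rightarrow> bool" where
  "convergent_splitting U V \<longleftrightarrow> rho (MP_inverse U * V) < 1"

definition proper_nonneg_splitting_I :: "real mat \<Rightarrow> real mat \<Rightarrow> real mat \<Rightarrow> bool" where
  "proper_nonneg_splitting_I A U V \<longleftrightarrow>
     proper_splitting A U V \<and> mat_nonneg (MP_inverse U * V)"

definition proper_nonneg_splitting_II :: "real mat \<Rightarrow> real mat \<Rightarrow> real mat \<Rightarrow> bool" where
  "proper_nonneg_splitting_II A U V \<longleftrightarrow>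
     proper_splitting A U V \<and> mat_nonneg (V * MP_inverse U)"

end

theory Submission
  imports Defs
begin

text \<open>
  Write \<open>G = A\<^sup>\<dagger>\<close> and \<open>H\<^sub>i = U\<^sub>i\<^sup>\<dagger>\<close>. For a proper splitting the projections \<open>H U\<close>, \<open>U H\<close> coincide
  with \<open>G A\<close>, \<open>A G\<close>, which yields \<open>H = G - (H V) G = G - G (V H)\<close>. Suppose splitting 1 is of
  type I and splitting 2 of type II, and put \<open>T = H\<^sub>1 V\<^sub>1\<close>, \<open>S = V\<^sub>2 H\<^sub>2\<close> (both nonnegative).
  The modulus of an eigenvector of \<open>T\<^sup>T\<close> for \<open>\<rho>(T)\<close> gives \<open>u \<ge> 0\<close> with \<open>T\<^sup>T u \<ge> \<rho>(T) u\<close>, and a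
  truncated Neumann series of \<open>S / t\<close> gives \<open>v \<ge> 0\<close> with \<open>S v \<le> t v\<close> for any \<open>t > \<rho>(S)\<close>.
  Testing the comparison \<open>H\<^sub>2 \<le> \<alpha> H\<^sub>1\<close> against \<open>u\<close> and \<open>v\<close> yields
  \<open>(1 - t) u\<^sup>TGv \<le> \<alpha> (1 - \<rho>(T)) u\<^sup>TGv\<close> with \<open>u\<^sup>TGv > 0\<close> (by the strict inequality \<open>H\<^sub>2 < H\<^sub>1\<close>),
  which is impossible when \<open>\<rho>(S) \<le> \<rho>(T)\<close>. Since \<open>\<rho>(V H) = \<rho>(H V)\<close>, this compares the
  iteration matrices; the case of the opposite types is the transposed argument.
\<close>

lemma assoc_mult_mat_dims:
  fixes A B C :: "'a::semiring_0 mat"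
  shows "dim_col A = dim_row B \<Longrightarrow> dim_col B = dim_row C \<Longrightarrow> A * B * C = A * (B * C)"
  by (rule assoc_mult_mat[of A "dim_row A" "dim_col A" B "dim_col B" C "dim_col C"]) auto

lemma transpose_mult_dims:
  fixes A B :: "'a::comm_semiring_0 mat"
  shows "dim_col A = dim_row B \<Longrightarrow> transpose_mat (A * B) = transpose_mat B * transpose_mat A"
  by (rule transpose_mult[of A "dim_row A" "dim_col A" B "dim_col B"]) auto

lemma assoc_mult_mat_vec_dims:
  fixes A B :: "'a::semiring_0 mat"
  shows "dim_col A = dim_row B \<Longrightarrow> dim_col B = dim_vec v \<Longrightarrow> (A * B) *\<^sub>v v = A *\<^sub>v (B *\<^sub>v v)"
  by (rule assoc_mult_mat_vec[of A "dim_row A" "dim_col A" B "dim_col B"]) auto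

lemma scalar_prod_sum_lessThan:
  "v \<in> carrier_vec r \<Longrightarrow> (w::'a::semiring_0 vec) \<bullet> v = (\<Sum>k<r. w $ k * v $ k)"
  unfolding scalar_prod_def by (simp add: atLeast0LessThan)

lemma mult_mat_vec_index_sum:
  "B \<in> carrier_mat m r \<Longrightarrow> i < m \<Longrightarrow> v \<in> carrier_vec r \<Longrightarrow>
   ((B::'a::semiring_0 mat) *\<^sub>v v) $ i = (\<Sum>k<r. B $$ (i,k) * v $ k)"
  by (subst index_mult_mat_vec) (auto simp: scalar_prod_def atLeast0LessThan intro!: sum.cong)

lemma mult_mat_index_sum:
  "B \<in> carrier_mat m r \<Longrightarrow> i < m \<Longrightarrow> C \<in> carrier_mat r n \<Longrightarrow> j < n \<Longrightarrow>
   ((B::'a::semiring_0 mat) * C) $$ (i,j) = (\<Sum>k<r. B $$ (i,k) * C $$ (k,j))"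
  by (subst index_mult_mat) (auto simp: scalar_prod_def atLeast0LessThan intro!: sum.cong)

lemma col_scalar_prod_sum:
  "C \<in> carrier_mat r n \<Longrightarrow> j < n \<Longrightarrow> y \<in> carrier_vec r \<Longrightarrow>
   col (C::'a::semiring_0 mat) j \<bullet> y = (\<Sum>k<r. C $$ (k,j) * y $ k)"
  unfolding scalar_prod_def by (auto simp: atLeast0LessThan intro!: sum.cong)

lemma smult_mat_mult_mat_vec:
  "A \<in> carrier_mat p q \<Longrightarrow> v \<in> carrier_vec q \<Longrightarrow>
   (k \<cdot>\<^sub>m (A::'a::comm_semiring_0 mat)) *\<^sub>v v = k \<cdot>\<^sub>v (A *\<^sub>v v)"
  by (rule eq_vecI) (auto simp: mult_mat_vec_index_sum[of _ p q] sum_distrib_left mult.assoc)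

lemma col_eq_mult_unit_vec:
  "M \<in> carrier_mat p q \<Longrightarrow> j < q \<Longrightarrow> col (M::'a::semiring_1 mat) j = M *\<^sub>v unit_vec q j"
  by (auto intro!: eq_vecI)

lemma vec_eq_zero_of_scalar_prod_self:
  assumes "(w::real vec) \<bullet> w = 0"
  shows "w = 0\<^sub>v (dim_vec w)"
proof -
  have "\<forall>i\<in>{0..<dim_vec w}. w $ i * w $ i = 0"
    using assms unfolding scalar_prod_def by (subst sum_nonneg_eq_0_iff[symmetric]) auto
  then show ?thesis by (auto intro!: eq_vecI)
qed

subsection \<open>Existence and uniqueness of the Moore--Penrose inverse\<close>

lemma is_MP_inverse_absorb_right:
  assumes X: "is_MP_inverse A X" and Y: "is_MP_inverse A Y"
  shows "X = X * A * Y"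
proof -
  from X have d: "dim_row X = dim_col A" "dim_col X = dim_row A"
    and X2: "X * A * X = X" and X3: "transpose_mat (A * X) = A * X"
    unfolding is_MP_inverse_def by auto
  from Y have Y1: "A * Y * A = A" and Y3: "transpose_mat (A * Y) = A * Y"
    and dY: "dim_row Y = dim_col A" "dim_col Y = dim_row A" unfolding is_MP_inverse_def by auto
  have AT: "transpose_mat A = transpose_mat A * (A * Y)"
  proof -
    have "transpose_mat A = transpose_mat (A * Y * A)" using Y1 by simp
    also have "\<dots> = transpose_mat A * transpose_mat (A * Y)"
      by (rule transpose_mult_dims) (simp add: dY)
    finally show ?thesis using Y3 by simp
  qed
  have "X = X * (A * X)" using X2 by (simp add: assoc_mult_mat_dims d)
  also have "\<dots> = X * (transpose_mat X * transpose_mat A)"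
    using X3 transpose_mult_dims[of A X] d by simp
  also have "\<dots> = X * (transpose_mat X * (transpose_mat A * (A * Y)))" using AT by simp
  also have "\<dots> = X * ((A * X) * (A * Y))"
    using X3 transpose_mult_dims[of A X] d dY by (simp add: assoc_mult_mat_dims[symmetric])
  also have "\<dots> = (X * A * X) * (A * Y)" by (simp add: assoc_mult_mat_dims d dY)
  also have "\<dots> = X * A * Y" using X2 by (simp add: assoc_mult_mat_dims d dY)
  finally show ?thesis .
qed

lemma is_MP_inverse_absorb_left:
  assumes X: "is_MP_inverse A X" and Y: "is_MP_inverse A Y"
  shows "Y = X * A * Y"
proof -
  from X have X1: "A * X * A = A" and X4: "transpose_mat (X * A) = X * A"
    and dX: "dim_row X = dim_col A" "dim_col X = dim_row A" unfolding is_MP_inverse_def by auto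
  from Y have d: "dim_row Y = dim_col A" "dim_col Y = dim_row A"
    and Y2: "Y * A * Y = Y" and Y4: "transpose_mat (Y * A) = Y * A"
    unfolding is_MP_inverse_def by auto
  have AT: "transpose_mat A = (X * A) * transpose_mat A"
  proof -
    have "transpose_mat A = transpose_mat (A * X * A)" using X1 by simp
    also have "\<dots> = transpose_mat (X * A) * transpose_mat A"
      using transpose_mult_dims[of A "X*A"] dX by (simp add: assoc_mult_mat_dims)
    finally show ?thesis using X4 by simp
  qed
  have "Y = (Y * A) * Y" using Y2 by simp
  also have "\<dots> = (transpose_mat A * transpose_mat Y) * Y"
    using Y4 transpose_mult_dims[of Y A] d by simp
  also have "\<dots> = ((X * A) * transpose_mat A * transpose_mat Y) * Y" using AT by simp
  also have "\<dots> = ((X * A) * (Y * A)) * Y"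
    using Y4 transpose_mult_dims[of Y A] d dX by (simp add: assoc_mult_mat_dims)
  also have "\<dots> = X * A * (Y * A * Y)" by (simp add: assoc_mult_mat_dims d dX)
  also have "\<dots> = X * A * Y" using Y2 by simp
  finally show ?thesis .
qed

lemma is_MP_inverse_unique: "is_MP_inverse A X \<Longrightarrow> is_MP_inverse A Y \<Longrightarrow> X = Y"
  using is_MP_inverse_absorb_right[of A X Y] is_MP_inverse_absorb_left[of A X Y] by simp

definition full_column_rank :: "real mat \<Rightarrow> bool" where
  "full_column_rank B \<longleftrightarrow>
     (\<forall>x\<in>carrier_vec (dim_col B). B *\<^sub>v x = 0\<^sub>v (dim_row B) \<longrightarrow> x = 0\<^sub>v (dim_col B))"

lemma full_column_rankD:
  assumes "full_column_rank B" "B \<in> carrier_mat m r" "x \<in> carrier_vec r" "B *\<^sub>v x = 0\<^sub>v m"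
  shows "x = 0\<^sub>v r"
  using assms unfolding full_column_rank_def by auto

lemma full_column_rank_transpose_iff:
  assumes C: "C \<in> carrier_mat r n"
  shows "full_column_rank (transpose_mat C) \<longleftrightarrow>
    (\<forall>y\<in>carrier_vec r. (\<forall>j<n. col C j \<bullet> y = 0) \<longrightarrow> y = 0\<^sub>v r)"
proof -
  have "transpose_mat C *\<^sub>v y = 0\<^sub>v n \<longleftrightarrow> (\<forall>j<n. col C j \<bullet> y = 0)" for y
    using C by (auto simp: vec_eq_iff)
  then show ?thesis using C unfolding full_column_rank_def by auto
qed

lemma mult_append_column:
  fixes B C :: "real mat"
  assumes B: "B \<in> carrier_mat m r" and C: "C \<in> carrier_mat r n" and z: "z \<in> carrier_vec r"
  shows "B * mat r (Suc n) (\<lambda>(i,j). if j < n then C $$ (i,j) else z $ i)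
       = mat m (Suc n) (\<lambda>(i,j). if j < n then (B * C) $$ (i,j) else (B *\<^sub>v z) $ i)"
    (is "B * ?C' = _")
proof (rule eq_matI)
  have col: "col ?C' j = (if j < n then col C j else z)" if "j < Suc n" for j
    using that C z by (auto intro!: eq_vecI)
  fix i j assume "i < dim_row (mat m (Suc n) (\<lambda>(i,j). if j < n then (B * C) $$ (i,j) else (B *\<^sub>v z) $ i))"
    and "j < dim_col (mat m (Suc n) (\<lambda>(i,j). if j < n then (B * C) $$ (i,j) else (B *\<^sub>v z) $ i))"
  then have "i < m" "j < Suc n" by auto
  then show "(B * ?C') $$ (i,j) = mat m (Suc n)
      (\<lambda>(i,j). if j < n then (B * C) $$ (i,j) else (B *\<^sub>v z) $ i) $$ (i,j)"
    using B C z col[of j] by auto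
qed (use B in auto)

lemma full_column_rank_transpose_append_column:
  fixes C :: "real mat"
  assumes C: "C \<in> carrier_mat r n" and z: "z \<in> carrier_vec r"
    and rk: "full_column_rank (transpose_mat C)"
  shows "full_column_rank (transpose_mat (mat r (Suc n) (\<lambda>(i,j). if j < n then C $$ (i,j) else z $ i)))"
    (is "full_column_rank (transpose_mat ?C')")
proof -
  have C': "?C' \<in> carrier_mat r (Suc n)" by simp
  have "\<forall>j<n. col C j \<bullet> y = 0" if cy: "\<forall>j<Suc n. col ?C' j \<bullet> y = 0" for y
  proof (intro allI impI)
    fix j assume j: "j < n"
    have col: "col C j = col ?C' j" using j C by (auto intro!: eq_vecI)
    have "col ?C' j \<bullet> y = 0" using cy less_SucI[OF j] by blast
    then show "col C j \<bullet> y = 0" unfolding col .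
  qed
  then show ?thesis
    using rk unfolding full_column_rank_transpose_iff[OF C] full_column_rank_transpose_iff[OF C']
    by blast
qed

lemma mult_append_column_block:
  fixes B C :: "real mat"
  assumes B: "B \<in> carrier_mat m r" and C: "C \<in> carrier_mat r n" and a: "a \<in> carrier_vec m"
  shows "mat m (Suc r) (\<lambda>(i,j). if j < r then B $$ (i,j) else a $ i) *
      mat (Suc r) (Suc n) (\<lambda>(i,j). if i < r then (if j < n then C $$ (i,j) else 0)
                                                else (if j < n then 0 else 1))
    = mat m (Suc n) (\<lambda>(i,j). if j < n then (B * C) $$ (i,j) else a $ i)"
    (is "?B' * ?C' = ?A")
proof (rule eq_matI)
  fix i j assume "i < dim_row ?A" and "j < dim_col ?A"
  then have i: "i < m" and j: "j < Suc n" by auto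
  have "(?B' * ?C') $$ (i,j) = (\<Sum>k<Suc r. ?B' $$ (i,k) * ?C' $$ (k,j))"
    by (rule mult_mat_index_sum[OF _ i _ j]) auto
  also have "\<dots> = (\<Sum>k<r. B $$ (i,k) * ?C' $$ (k,j)) + a $ i * ?C' $$ (r,j)"
    using i by simp
  also have "\<dots> = ?A $$ (i,j)"
  proof (cases "j < n")
    case True
    then show ?thesis using i j mult_mat_index_sum[OF B i C True] by simp
  next
    case False
    then show ?thesis using i j by simp
  qed
  finally show "(?B' * ?C') $$ (i,j) = ?A $$ (i,j)" .
qed auto

lemma full_column_rank_append_column:
  fixes B :: "real mat"
  assumes B: "B \<in> carrier_mat m r" and rk: "full_column_rank B" and a: "a \<in> carrier_vec m"
    and a_notin: "\<forall>z\<in>carrier_vec r. B *\<^sub>v z \<noteq> a"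
  shows "full_column_rank (mat m (Suc r) (\<lambda>(i,j). if j < r then B $$ (i,j) else a $ i))"
    (is "full_column_rank ?B'")
  unfolding full_column_rank_def
proof (intro ballI impI)
  fix x :: "real vec" assume "x \<in> carrier_vec (dim_col ?B')" and Bx: "?B' *\<^sub>v x = 0\<^sub>v (dim_row ?B')"
  then have x: "x \<in> carrier_vec (Suc r)" and Bx: "?B' *\<^sub>v x = 0\<^sub>v m" by auto
  define x' where "x' = vec r (\<lambda>i. x $ i)"
  have x': "x' \<in> carrier_vec r" unfolding x'_def by auto
  have ent: "(B *\<^sub>v x') $ i + x $ r * a $ i = 0" if i: "i < m" for i
  proof -
    have "0 = (?B' *\<^sub>v x) $ i" using Bx i by simp
    also have "\<dots> = (\<Sum>k<Suc r. ?B' $$ (i,k) * x $ k)" by (rule mult_mat_vec_index_sum[OF _ i x]) auto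
    also have "\<dots> = (\<Sum>k<r. B $$ (i,k) * x' $ k) + x $ r * a $ i"
      using i by (simp add: x'_def)
    also have "(\<Sum>k<r. B $$ (i,k) * x' $ k) = (B *\<^sub>v x') $ i"
      by (rule mult_mat_vec_index_sum[OF B i x', symmetric])
    finally show ?thesis by simp
  qed
  have xr: "x $ r = 0"
  proof (rule ccontr)
    assume nz: "x $ r \<noteq> 0"
    have "B *\<^sub>v ((- 1 / x $ r) \<cdot>\<^sub>v x') = a"
    proof (rule eq_vecI)
      fix i assume "i < dim_vec a"
      then have i: "i < m" using a by auto
      have "(B *\<^sub>v ((- 1 / x $ r) \<cdot>\<^sub>v x')) $ i = (- 1 / x $ r) * (B *\<^sub>v x') $ i"
        using i B x' by (simp add: mult_mat_vec)
      also have "\<dots> = a $ i" using ent[OF i] nz by (simp add: field_simps)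
      finally show "(B *\<^sub>v ((- 1 / x $ r) \<cdot>\<^sub>v x')) $ i = a $ i" .
    qed (use a B in auto)
    with a_notin x' show False by auto
  qed
  have "B *\<^sub>v x' = 0\<^sub>v m"
    by (rule eq_vecI) (use ent xr B in auto)
  with rk B x' have "x' = 0\<^sub>v r" by (rule full_column_rankD)
  then have "x $ i = 0" if "i < r" for i
    using that unfolding x'_def by (metis index_vec index_zero_vec(1))
  then show "x = 0\<^sub>v (dim_col ?B')" using xr x by (auto intro!: eq_vecI simp: less_Suc_eq)
qed

lemma full_column_rank_transpose_block:
  fixes C :: "real mat"
  assumes C: "C \<in> carrier_mat r n" and rk: "full_column_rank (transpose_mat C)"
  shows "full_column_rank (transpose_mat (mat (Suc r) (Suc n)
     (\<lambda>(i,j). if i < r then (if j < n then C $$ (i,j) else 0) else (if j < n then 0 else 1))))"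
    (is "full_column_rank (transpose_mat ?C')")
proof -
  have C': "?C' \<in> carrier_mat (Suc r) (Suc n)" by simp
  have "y = 0\<^sub>v (Suc r)" if y: "y \<in> carrier_vec (Suc r)" and cy: "\<forall>j<Suc n. col ?C' j \<bullet> y = 0" for y
  proof -
    define y' where "y' = vec r (\<lambda>i. y $ i)"
    have y': "y' \<in> carrier_vec r" unfolding y'_def by auto
    have col_prod: "col ?C' j \<bullet> y = (if j < n then col C j \<bullet> y' else y $ r)" if j: "j < Suc n" for j
    proof -
      have "col ?C' j \<bullet> y = (\<Sum>k<Suc r. ?C' $$ (k,j) * y $ k)"
        by (rule col_scalar_prod_sum[OF C' j y])
      also have "\<dots> = (\<Sum>k<r. ?C' $$ (k,j) * y $ k) + ?C' $$ (r,j) * y $ r"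
        by (rule sum.lessThan_Suc)
      also have "\<dots> = (if j < n then col C j \<bullet> y' else 0) + (if j < n then 0 else 1) * y $ r"
      proof -
        have "(\<Sum>k<r. ?C' $$ (k,j) * y $ k) = (\<Sum>k<r. (if j < n then C $$ (k,j) else 0) * y' $ k)"
          by (rule sum.cong) (use j in \<open>auto simp: y'_def\<close>)
        also have "\<dots> = (if j < n then col C j \<bullet> y' else 0)"
          using col_scalar_prod_sum[OF C _ y'] by auto
        finally show ?thesis using j by simp
      qed
      finally show ?thesis by simp
    qed
    have "col ?C' n \<bullet> y = 0" using cy lessI by blast
    then have yr: "y $ r = 0" using col_prod[OF lessI] by simp
    have "\<forall>j<n. col C j \<bullet> y' = 0"
    proof (intro allI impI)
      fix j assume j: "j < n"
      have "col ?C' j \<bullet> y = 0" using cy less_SucI[OF j] by blast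
      then show "col C j \<bullet> y' = 0" using col_prod[OF less_SucI[OF j]] j by simp
    qed
    with rk y' have "y' = 0\<^sub>v r" unfolding full_column_rank_transpose_iff[OF C] by blast
    then have "y $ i = 0" if "i < r" for i
      using that unfolding y'_def by (metis index_vec index_zero_vec(1))
    then show "y = 0\<^sub>v (Suc r)" using yr y by (auto intro!: eq_vecI simp: less_Suc_eq)
  qed
  then show ?thesis unfolding full_column_rank_transpose_iff[OF C'] by blast
qed

lemma full_rank_factorization:
  fixes A :: "real mat"
  assumes "A \<in> carrier_mat m n"
  shows "\<exists>r B C. B \<in> carrier_mat m r \<and> C \<in> carrier_mat r n \<and> A = B * C \<and>
     full_column_rank B \<and> full_column_rank (transpose_mat C)"
  using assms
proof (induction n arbitrary: A)
  case 0
  show ?case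
    by (rule exI[of _ 0], rule exI[of _ "0\<^sub>m m 0"], rule exI[of _ "0\<^sub>m 0 0"])
       (use 0 in \<open>auto intro!: eq_matI eq_vecI simp: full_column_rank_def\<close>)
next
  case (Suc n)
  define a where "a = col A n"
  have a: "a \<in> carrier_vec m" using Suc.prems unfolding a_def carrier_vec_def by simp
  obtain r B C where B: "B \<in> carrier_mat m r" and C: "C \<in> carrier_mat r n"
    and BC: "mat m n (\<lambda>(i,j). A $$ (i,j)) = B * C"
    and rkB: "full_column_rank B" and rkC: "full_column_rank (transpose_mat C)"
    using Suc.IH[of "mat m n (\<lambda>(i,j). A $$ (i,j))"] by auto
  have A: "A = mat m (Suc n) (\<lambda>(i,j). if j < n then (B * C) $$ (i,j) else a $ i)"
    unfolding BC[symmetric] a_def using Suc.prems by (auto intro!: eq_matI simp: less_Suc_eq)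
  show ?case
  proof (cases "\<exists>z\<in>carrier_vec r. B *\<^sub>v z = a")
    case True
    then obtain z where z: "z \<in> carrier_vec r" and Bz: "B *\<^sub>v z = a" by blast
    define C' where "C' = mat r (Suc n) (\<lambda>(i,j). if j < n then C $$ (i,j) else z $ i)"
    have "A = B * C'"
      using mult_append_column[OF B C z, symmetric] unfolding A C'_def Bz .
    moreover have "full_column_rank (transpose_mat C')"
      unfolding C'_def by (rule full_column_rank_transpose_append_column[OF C z rkC])
    moreover have "C' \<in> carrier_mat r (Suc n)" unfolding C'_def by simp
    ultimately show ?thesis using B rkB by blast
  next
    case False
    define B' where "B' = mat m (Suc r) (\<lambda>(i,j). if j < r then B $$ (i,j) else a $ i)"
    define C' where "C' = mat (Suc r) (Suc n) (\<lambda>(i,j).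
      if i < r then (if j < n then C $$ (i,j) else 0) else (if j < n then 0 else 1))"
    have "A = B' * C'"
      using mult_append_column_block[OF B C a, symmetric] unfolding A B'_def C'_def .
    moreover have "full_column_rank B'"
      unfolding B'_def by (rule full_column_rank_append_column[OF B rkB a]) (use False in blast)
    moreover have "full_column_rank (transpose_mat C')"
      unfolding C'_def by (rule full_column_rank_transpose_block[OF C rkC])
    moreover have "B' \<in> carrier_mat m (Suc r)" "C' \<in> carrier_mat (Suc r) (Suc n)"
      unfolding B'_def C'_def by simp_all
    ultimately have "B' \<in> carrier_mat m (Suc r) \<and> C' \<in> carrier_mat (Suc r) (Suc n) \<and>
      A = B' * C' \<and> full_column_rank B' \<and> full_column_rank (transpose_mat C')" by blast
    then show ?thesis by blast
  qed
qed

lemma gram_mat_inverse: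
  fixes B :: "real mat"
  assumes B: "B \<in> carrier_mat m r" and rk: "full_column_rank B"
  shows "\<exists>Mi. Mi \<in> carrier_mat r r \<and> Mi * (transpose_mat B * B) = 1\<^sub>m r \<and>
     (transpose_mat B * B) * Mi = 1\<^sub>m r \<and> transpose_mat Mi = Mi"
proof -
  define M where "M = transpose_mat B * B"
  have M: "M \<in> carrier_mat r r" using B unfolding M_def by auto
  have "det M \<noteq> 0"
  proof
    assume "det M = 0"
    then obtain v where v: "v \<in> carrier_vec r" "v \<noteq> 0\<^sub>v r" "M *\<^sub>v v = 0\<^sub>v r"
      using det_0_iff_vec_prod_zero[OF M] by auto
    define w where "w = B *\<^sub>v v"
    have "M *\<^sub>v v = transpose_mat B *\<^sub>v w" unfolding M_def w_def
      using B v by (simp add: assoc_mult_mat_vec[of _ r m _ r])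
    with v(3) have eq: "transpose_mat B *\<^sub>v w = 0\<^sub>v r" by simp
    have "0 = (transpose_mat B *\<^sub>v w) \<bullet> v" using v(1) by (simp add: eq)
    also have "\<dots> = w \<bullet> w" unfolding w_def
      by (rule transpose_vec_mult_scalar[OF B v(1)]) (use B v in \<open>simp add: w_def\<close>)
    finally have "w = 0\<^sub>v (dim_vec w)" using vec_eq_zero_of_scalar_prod_self by simp
    then have "B *\<^sub>v v = 0\<^sub>v m" using B unfolding w_def by simp
    then have "v = 0\<^sub>v r" using full_column_rankD[OF rk B v(1)] by blast
    with v(2) show False by blast
  qed
  from det_non_zero_imp_unit[OF M this, of "()"] obtain Mi where Mi: "Mi \<in> carrier_mat r r"
    and l: "Mi * M = 1\<^sub>m r" and rr: "M * Mi = 1\<^sub>m r"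
    unfolding Units_def ring_mat_def by auto
  have MT: "transpose_mat M = M" using B unfolding M_def by (simp add: transpose_mult[of _ r m _ r])
  have "transpose_mat Mi * M = transpose_mat Mi * transpose_mat M" using MT by simp
  also have "\<dots> = transpose_mat (M * Mi)" using M Mi by (simp add: transpose_mult)
  finally have "transpose_mat Mi * M = 1\<^sub>m r" using rr by simp
  have "transpose_mat Mi = transpose_mat Mi * (M * Mi)" using rr Mi by simp
  also have "\<dots> = (transpose_mat Mi * M) * Mi" using Mi M by (simp add: assoc_mult_mat[of _ r r _ r _ r])
  also have "\<dots> = Mi" using \<open>transpose_mat Mi * M = 1\<^sub>m r\<close> Mi by simp
  finally show ?thesis using Mi l rr unfolding M_def by blast
qed

text \<open>From a full rank factorization \<open>A = B C\<close> one gets \<open>A\<^sup>\<dagger> = C\<^sup>T (C C\<^sup>T)\<^sup>-\<^sup>1 (B\<^sup>T B)\<^sup>-\<^sup>1 B\<^sup>T\<close>.\<close>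

lemma is_MP_inverse_exists: "\<exists>X. is_MP_inverse A X"
proof -
  define m where "m = dim_row A"
  define n where "n = dim_col A"
  have A: "A \<in> carrier_mat m n" unfolding m_def n_def by auto
  from full_rank_factorization[OF A] obtain r B C where B: "B \<in> carrier_mat m r"
    and C: "C \<in> carrier_mat r n" and ABC: "A = B * C"
    and rkB: "full_column_rank B" and rkC: "full_column_rank (transpose_mat C)" by blast
  obtain Mi where Mi: "Mi \<in> carrier_mat r r" and Ml: "Mi * (transpose_mat B * B) = 1\<^sub>m r"
    and MiT: "transpose_mat Mi = Mi" using gram_mat_inverse[OF B rkB] by blast
  obtain Ni where Ni: "Ni \<in> carrier_mat r r" and Nr: "(C * transpose_mat C) * Ni = 1\<^sub>m r"
    and NiT: "transpose_mat Ni = Ni"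
    using gram_mat_inverse[of "transpose_mat C" n r] C rkC by auto
  have d: "dim_row A = m" "dim_col A = n" "dim_row B = m" "dim_col B = r" "dim_row C = r"
    "dim_col C = n" "dim_row Mi = r" "dim_col Mi = r" "dim_row Ni = r" "dim_col Ni = r"
    using A B C Mi Ni by auto
  have cN: "C * (transpose_mat C * (Ni * Z)) = Z" if Z: "dim_row Z = r" for Z :: "real mat"
  proof -
    have "C * (transpose_mat C * (Ni * Z)) = ((C * transpose_mat C) * Ni) * Z"
      by (simp add: assoc_mult_mat_dims d Z)
    also have "\<dots> = Z" using Nr Z by (simp add: left_mult_one_mat')
    finally show ?thesis .
  qed
  have cM: "Mi * (transpose_mat B * (B * Z)) = Z" if Z: "dim_row Z = r" for Z :: "real mat"
  proof -
    have "Mi * (transpose_mat B * (B * Z)) = (Mi * (transpose_mat B * B)) * Z"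
      by (simp add: assoc_mult_mat_dims d Z)
    also have "\<dots> = Z" using Ml Z by (simp add: left_mult_one_mat')
    finally show ?thesis .
  qed
  define X where "X = transpose_mat C * (Ni * (Mi * transpose_mat B))"
  have AX: "A * X = B * (Mi * transpose_mat B)"
    unfolding ABC X_def by (simp add: assoc_mult_mat_dims d cN)
  have XA: "X * A = transpose_mat C * (Ni * C)"
    unfolding ABC X_def by (simp add: assoc_mult_mat_dims d cM)
  have "is_MP_inverse A X"
    unfolding is_MP_inverse_def
  proof (intro conjI)
    show "X \<in> carrier_mat (dim_col A) (dim_row A)" unfolding X_def using d by auto
    show "A * X * A = A" unfolding AX by (simp add: ABC assoc_mult_mat_dims d cM)
    show "X * A * X = X" unfolding XA by (simp add: X_def assoc_mult_mat_dims d cM cN)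
    show "transpose_mat (A * X) = A * X"
      unfolding AX by (simp add: transpose_mult_dims assoc_mult_mat_dims d MiT)
    show "transpose_mat (X * A) = X * A"
      unfolding XA by (simp add: transpose_mult_dims assoc_mult_mat_dims d NiT)
  qed
  then show ?thesis by blast
qed

lemma is_MP_inverse_MP_inverse: "is_MP_inverse A (MP_inverse A)"
  unfolding MP_inverse_def using is_MP_inverse_exists[of A] is_MP_inverse_unique[of A]
  by (metis theI)

lemma MP_inverse_carrier: "A \<in> carrier_mat m n \<Longrightarrow> MP_inverse A \<in> carrier_mat n m"
  using is_MP_inverse_MP_inverse[of A] unfolding is_MP_inverse_def by auto

subsection \<open>Proper splittings\<close>

lemma proper_splitting_carrier:
  assumes ps: "proper_splitting A U V" and A: "A \<in> carrier_mat m n"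
  shows "U \<in> carrier_mat m n" and "V \<in> carrier_mat m n"
proof -
  have "U \<in> carrier_mat (dim_row A) (dim_col A) \<and> V \<in> carrier_mat (dim_row A) (dim_col A)"
    using ps unfolding proper_splitting_def by blast
  with A show "U \<in> carrier_mat m n" and "V \<in> carrier_mat m n" by auto
qed

lemma MP_inverse_range_projection:
  fixes A U G :: "real mat"
  assumes A: "A \<in> carrier_mat m n" and U: "U \<in> carrier_mat m n"
    and R: "mat_range U \<subseteq> mat_range A" and G: "is_MP_inverse A G"
  shows "(A * G) * U = U"
proof -
  have Gc: "G \<in> carrier_mat n m" and AGA: "A * G * A = A"
    using G A unfolding is_MP_inverse_def by auto
  show ?thesis
  proof (rule mat_col_eqI)
    fix j assume "j < dim_col U" then have j: "j < n" using U by auto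
    have "col U j \<in> mat_range U" unfolding mat_range_def col_eq_mult_unit_vec[OF U j] using U by auto
    with R obtain x where x: "x \<in> carrier_vec n" and cx: "col U j = A *\<^sub>v x"
      unfolding mat_range_def using A by auto
    have "col ((A * G) * U) j = (A * G) *\<^sub>v col U j"
      by (rule col_mult2[of "A*G" m m U n j]) (use A Gc U j in auto)
    also have "\<dots> = (A * G * A) *\<^sub>v x" unfolding cx using A Gc x
      by (simp add: assoc_mult_mat_vec_dims)
    also have "\<dots> = col U j" using AGA cx by simp
    finally show "col ((A * G) * U) j = col U j" .
  qed (use A Gc U in auto)
qed

lemma MP_inverse_kernel_projection:
  fixes A U G :: "real mat"
  assumes A: "A \<in> carrier_mat m n" and U: "U \<in> carrier_mat m n"
    and K: "mat_kernel A \<subseteq> mat_kernel U" and G: "is_MP_inverse A G"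
  shows "U * (G * A) = U"
proof -
  have Gc: "G \<in> carrier_mat n m" and AGA: "A * G * A = A"
    using G A unfolding is_MP_inverse_def by auto
  show ?thesis
  proof (rule mat_col_eqI)
    fix j assume "j < dim_col U" then have j: "j < n" using U by auto
    define e where "e = (unit_vec n j :: real vec)"
    have e: "e \<in> carrier_vec n" unfolding e_def by simp
    have GAe: "(G * A) *\<^sub>v e \<in> carrier_vec n" using e Gc A by auto
    have "A *\<^sub>v (e - (G * A) *\<^sub>v e) = A *\<^sub>v e - (A * G * A) *\<^sub>v e" using A Gc e
      by (simp add: mult_minus_distrib_mat_vec[of _ m n] assoc_mult_mat_vec[of _ m n _ n]
          assoc_mult_mat[of A m n G m A n])
    also have "\<dots> = 0\<^sub>v m" unfolding AGA using A e by simp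
    finally have "e - (G * A) *\<^sub>v e \<in> mat_kernel A" using e GAe A unfolding mat_kernel_def by auto
    with K have "U *\<^sub>v (e - (G * A) *\<^sub>v e) = 0\<^sub>v m" unfolding mat_kernel_def using U by auto
    then have h: "U *\<^sub>v e - U *\<^sub>v ((G * A) *\<^sub>v e) = 0\<^sub>v m" using U e GAe
      by (simp add: mult_minus_distrib_mat_vec[of _ m n])
    have eq: "U *\<^sub>v e = U *\<^sub>v ((G * A) *\<^sub>v e)"
    proof (rule eq_vecI)
      fix i assume "i < dim_vec (U *\<^sub>v ((G * A) *\<^sub>v e))"
      then have i: "i < m" using U by simp
      have "(U *\<^sub>v e - U *\<^sub>v ((G * A) *\<^sub>v e)) $ i = 0" using h i by simp
      then show "(U *\<^sub>v e) $ i = (U *\<^sub>v ((G * A) *\<^sub>v e)) $ i" using i U by simp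
    qed (use U in simp)
    have "col (U * (G * A)) j = U *\<^sub>v col (G * A) j"
      by (rule col_mult2[of U m n "G*A" n j]) (use A Gc U j in auto)
    also have "\<dots> = U *\<^sub>v ((G * A) *\<^sub>v e)"
      using col_eq_mult_unit_vec[of "G*A" n n j] Gc A j unfolding e_def by simp
    also have "\<dots> = col U j" using eq col_eq_mult_unit_vec[OF U j] unfolding e_def by simp
    finally show "col (U * (G * A)) j = col U j" .
  qed (use A Gc U in auto)
qed

lemma symmetric_mat_eq_of_absorb_left:
  fixes P Q :: "real mat"
  assumes P: "P \<in> carrier_mat k k" and Q: "Q \<in> carrier_mat k k"
    and PT: "transpose_mat P = P" and QT: "transpose_mat Q = Q"
    and PQ: "P * Q = P" and QP: "Q * P = Q"
  shows "P = Q"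
proof -
  have "P = transpose_mat (P * Q)" using PQ PT by simp
  also have "\<dots> = Q * P" using P Q PT QT by (simp add: transpose_mult)
  finally show ?thesis using QP by simp
qed

lemma symmetric_mat_eq_of_absorb_right:
  fixes P Q :: "real mat"
  assumes P: "P \<in> carrier_mat k k" and Q: "Q \<in> carrier_mat k k"
    and PT: "transpose_mat P = P" and QT: "transpose_mat Q = Q"
    and PQ: "P * Q = Q" and QP: "Q * P = P"
  shows "P = Q"
proof -
  have "P = transpose_mat (Q * P)" using QP PT by simp
  also have "\<dots> = P * Q" using P Q PT QT by (simp add: transpose_mult)
  finally show ?thesis using PQ by simp
qed

lemma proper_splitting_projections:
  assumes ps: "proper_splitting A U V"
  shows "MP_inverse U * U = MP_inverse A * A" and "U * MP_inverse U = A * MP_inverse A"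
proof -
  define G where "G = MP_inverse A"
  define H where "H = MP_inverse U"
  have A: "A \<in> carrier_mat (dim_row A) (dim_col A)" by auto
  note ps' = ps[unfolded proper_splitting_def]
  have U: "U \<in> carrier_mat (dim_row A) (dim_col A)" and RU: "mat_range U = mat_range A"
    and KU: "mat_kernel U = mat_kernel A" using ps' by blast+
  have G: "is_MP_inverse A G" and H: "is_MP_inverse U H"
    unfolding G_def H_def by (rule is_MP_inverse_MP_inverse)+
  then have Gc: "G \<in> carrier_mat (dim_col A) (dim_row A)" and Hc: "H \<in> carrier_mat (dim_col A) (dim_row A)"
    and GT: "transpose_mat (A * G) = A * G" "transpose_mat (G * A) = G * A"
    and HT: "transpose_mat (U * H) = U * H" "transpose_mat (H * U) = H * U"
    using U unfolding is_MP_inverse_def by auto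
  have d: "dim_row U = dim_row A" "dim_col U = dim_col A" "dim_row G = dim_col A"
    "dim_col G = dim_row A" "dim_row H = dim_col A" "dim_col H = dim_row A"
    using U Gc Hc by auto
  have r1: "(A * G) * U = U" by (rule MP_inverse_range_projection[OF A U _ G]) (use RU in simp)
  have r2: "(U * H) * A = A" by (rule MP_inverse_range_projection[OF U A _ H]) (use RU in simp)
  have k1: "U * (G * A) = U" by (rule MP_inverse_kernel_projection[OF A U _ G]) (use KU in simp)
  have k2: "A * (H * U) = A" by (rule MP_inverse_kernel_projection[OF U A _ H]) (use KU in simp)
  show "H * U = G * A"
  proof (rule symmetric_mat_eq_of_absorb_left[of _ "dim_col A"])
    show "H * U * (G * A) = H * U" using k1 by (simp add: assoc_mult_mat_dims d)
    show "G * A * (H * U) = G * A" using k2 by (simp add: assoc_mult_mat_dims d)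
  qed (use HT GT d in auto)
  show "U * H = A * G"
  proof (rule symmetric_mat_eq_of_absorb_right[of _ "dim_row A"])
    show "U * H * (A * G) = A * G" using r2 by (simp add: assoc_mult_mat_dims[symmetric] d)
    show "A * G * (U * H) = U * H" using r1 by (simp add: assoc_mult_mat_dims[symmetric] d)
  qed (use HT GT d in auto)
qed

lemma proper_splitting_MP_inverse_eqs:
  fixes A U V :: "real mat"
  assumes ps: "proper_splitting A U V"
  shows "MP_inverse U = MP_inverse A - (MP_inverse U * V) * MP_inverse A"
    and "MP_inverse U = MP_inverse A - MP_inverse A * (V * MP_inverse U)"
proof -
  define m where "m = dim_row A"
  define n where "n = dim_col A"
  define G where "G = MP_inverse A"
  define H where "H = MP_inverse U"
  have A: "A \<in> carrier_mat m n" unfolding m_def n_def by auto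
  note ps' = ps[unfolded proper_splitting_def]
  have U: "U \<in> carrier_mat m n" and V: "V \<in> carrier_mat m n" and AUV: "A = U - V"
    using ps' unfolding m_def n_def by blast+
  have VUA: "V = U - A" unfolding AUV using U V by (auto intro!: eq_matI)
  have Gc: "G \<in> carrier_mat n m" and Hc: "H \<in> carrier_mat n m"
    unfolding G_def H_def using MP_inverse_carrier A U by auto
  have G2: "G * A * G = G" and H2: "H * U * H = H"
    using is_MP_inverse_MP_inverse[of A] is_MP_inverse_MP_inverse[of U]
    unfolding G_def H_def is_MP_inverse_def by auto
  have HU: "H * U = G * A" and UH: "U * H = A * G"
    using proper_splitting_projections[OF ps] unfolding G_def H_def by auto
  have d: "dim_row A = m" "dim_col A = n" "dim_row U = m" "dim_col U = n"
    "dim_row G = n" "dim_col G = m" "dim_row H = n" "dim_col H = m"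
    using A U Gc Hc by auto
  have "H * V * G = H * U * G - H * A * G" unfolding VUA using U A Hc Gc
    by (simp add: mult_minus_distrib_mat[of _ n m] minus_mult_distrib_mat[of _ n n])
  also have "H * U * G = G" using HU G2 by simp
  also have "H * A * G = H * (U * H)" unfolding UH by (simp add: assoc_mult_mat_dims d)
  also have "\<dots> = H" using H2 by (simp add: assoc_mult_mat_dims d)
  finally have e1: "H * V * G = G - H" .
  have "G * (V * H) = G * U * H - G * A * H" unfolding VUA using U A Hc Gc
    using mult_minus_distrib_mat[of G n m "U*H" m "A*H"]
    by (simp add: minus_mult_distrib_mat[of _ m n] assoc_mult_mat_dims d)
  also have "G * U * H = G * (A * G)" unfolding UH[symmetric] by (simp add: assoc_mult_mat_dims d)
  also have "\<dots> = G" using G2 by (simp add: assoc_mult_mat_dims d)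
  also have "G * A * H = H" using HU H2 by simp
  finally have e2: "G * (V * H) = G - H" .
  show "MP_inverse U = MP_inverse A - (MP_inverse U * V) * MP_inverse A"
    unfolding G_def[symmetric] H_def[symmetric] e1 using Gc Hc by (auto intro!: eq_matI)
  show "MP_inverse U = MP_inverse A - MP_inverse A * (V * MP_inverse U)"
    unfolding G_def[symmetric] H_def[symmetric] e2 using Gc Hc by (auto intro!: eq_matI)
qed

subsection \<open>Spectral radius of real matrices\<close>

abbreviation of_real_mat :: "real mat \<Rightarrow> complex mat" where
  "of_real_mat M \<equiv> map_mat complex_of_real M"

lemma eigenvalue_norm_le_rho:
  fixes M :: "real mat"
  assumes M: "M \<in> carrier_mat n n" and z: "z \<in> carrier_vec n" "z \<noteq> 0\<^sub>v n"
    and ev: "of_real_mat M *\<^sub>v z = l \<cdot>\<^sub>v z"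
  shows "cmod l \<le> rho M"
proof -
  have n: "n > 0" using z by (cases n) auto
  have Mc: "of_real_mat M \<in> carrier_mat n n" using M by simp
  have "eigenvector (of_real_mat M) z l" unfolding eigenvector_def using z ev M by auto
  then have "l \<in> spectrum (of_real_mat M)" unfolding spectrum_def eigenvalue_def by auto
  then show ?thesis unfolding rho_def using spectral_radius_mem_max(2)[OF Mc n] by auto
qed

lemma rho_eigenvalue:
  fixes M :: "real mat"
  assumes M: "M \<in> carrier_mat n n" and n: "n > 0"
  obtains l z where "z \<in> carrier_vec n" "z \<noteq> 0\<^sub>v n" "of_real_mat M *\<^sub>v z = l \<cdot>\<^sub>v z" "cmod l = rho M"
proof -
  have Mc: "of_real_mat M \<in> carrier_mat n n" using M by simp
  from spectral_radius_mem_max(1)[OF Mc n] obtain l where l: "l \<in> spectrum (of_real_mat M)"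
    and nl: "cmod l = rho M" unfolding rho_def by auto
  from l obtain z where "eigenvector (of_real_mat M) z l" unfolding spectrum_def eigenvalue_def by auto
  then show ?thesis using that nl M unfolding eigenvector_def by auto
qed

lemma rho_nonneg: "M \<in> carrier_mat n n \<Longrightarrow> n > 0 \<Longrightarrow> 0 \<le> rho M"
  by (metis rho_eigenvalue norm_ge_zero)

lemma rho_transpose:
  fixes M :: "real mat"
  assumes M: "M \<in> carrier_mat n n"
  shows "rho (transpose_mat M) = rho M"
proof -
  have Mc: "of_real_mat M \<in> carrier_mat n n" using M by simp
  have "spectrum (of_real_mat (transpose_mat M)) = spectrum (of_real_mat M)"
    using spectrum_root_char_poly[OF Mc] spectrum_root_char_poly[of "transpose_mat (of_real_mat M)" n]
      Mc char_poly_transpose_mat[OF Mc]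
    by (simp add: map_mat_transpose[symmetric])
  then show ?thesis unfolding rho_def spectral_radius_def by simp
qed

lemma rho_mult_le:
  fixes X Y :: "real mat"
  assumes X: "X \<in> carrier_mat p q" and Y: "Y \<in> carrier_mat q p" and p: "p > 0" and q: "q > 0"
  shows "rho (X * Y) \<le> rho (Y * X)"
proof -
  have XY: "X * Y \<in> carrier_mat p p" and YX: "Y * X \<in> carrier_mat q q" using X Y by auto
  obtain l z where z: "z \<in> carrier_vec p" "z \<noteq> 0\<^sub>v p"
    and ev: "of_real_mat (X * Y) *\<^sub>v z = l \<cdot>\<^sub>v z" and nl: "cmod l = rho (X * Y)"
    using rho_eigenvalue[OF XY p] by blast
  show ?thesis
  proof (cases "l = 0")
    case True
    then show ?thesis using nl rho_nonneg[OF YX q] by simp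
  next
    case False
    have Xc: "of_real_mat X \<in> carrier_mat p q" and Yc: "of_real_mat Y \<in> carrier_mat q p"
      using X Y by auto
    have mXY: "of_real_mat (X * Y) = of_real_mat X * of_real_mat Y"
      using of_real_hom.mat_hom_mult[OF X Y] by simp
    have mYX: "of_real_mat (Y * X) = of_real_mat Y * of_real_mat X"
      using of_real_hom.mat_hom_mult[OF Y X] by simp
    define w where "w = of_real_mat Y *\<^sub>v z"
    have w: "w \<in> carrier_vec q" unfolding w_def using Yc z by auto
    have Xw: "of_real_mat X *\<^sub>v w = l \<cdot>\<^sub>v z" unfolding w_def using ev mXY Xc Yc z
      by (simp add: assoc_mult_mat_vec[of _ p q _ p])
    have "w \<noteq> 0\<^sub>v q"
    proof
      assume "w = 0\<^sub>v q"
      moreover have "of_real_mat X *\<^sub>v 0\<^sub>v q = 0\<^sub>v p"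
        by (rule eq_vecI) (use Xc in \<open>auto simp: scalar_prod_def\<close>)
      ultimately have "l \<cdot>\<^sub>v z = 0\<^sub>v p" using Xw by simp
      then have "z = 0\<^sub>v p" using z False by (auto simp: vec_eq_iff)
      then show False using z by simp
    qed
    moreover have "of_real_mat (Y * X) *\<^sub>v w = l \<cdot>\<^sub>v w"
      unfolding mYX using Xc Yc w z Xw
      by (simp add: assoc_mult_mat_vec[of _ q p _ q] mult_mat_vec w_def)
    ultimately have "cmod l \<le> rho (Y * X)" by (rule eigenvalue_norm_le_rho[OF YX w])
    then show ?thesis using nl by simp
  qed
qed

lemma rho_mult_commute:
  fixes X Y :: "real mat"
  assumes "X \<in> carrier_mat p q" and "Y \<in> carrier_mat q p" and "p > 0" and "q > 0"
  shows "rho (X * Y) = rho (Y * X)"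
  using rho_mult_le[of X p q Y] rho_mult_le[of Y q p X] assms by (simp add: order_antisym)

lemma rho_smult_le:
  fixes M :: "real mat"
  assumes M: "M \<in> carrier_mat n n" and n: "n > 0" and s: "s > 0"
  shows "rho (s \<cdot>\<^sub>m M) \<le> s * rho M"
proof -
  have sM': "s \<cdot>\<^sub>m M \<in> carrier_mat n n" using M by simp
  obtain l z where z: "z \<in> carrier_vec n" "z \<noteq> 0\<^sub>v n"
    and ev: "of_real_mat (s \<cdot>\<^sub>m M) *\<^sub>v z = l \<cdot>\<^sub>v z" and nl: "cmod l = rho (s \<cdot>\<^sub>m M)"
    by (rule rho_eigenvalue[OF sM' n])
  have sM: "of_real_mat (s \<cdot>\<^sub>m M) \<in> carrier_mat n n" using M by simp
  have Ms: "of_real_mat M = complex_of_real (1 / s) \<cdot>\<^sub>m of_real_mat (s \<cdot>\<^sub>m M)"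
    by (rule eq_matI) (use s M in auto)
  have "of_real_mat M *\<^sub>v z = (complex_of_real (1 / s) * l) \<cdot>\<^sub>v z"
    unfolding Ms using smult_mat_mult_mat_vec[OF sM z(1)] ev by (simp add: smult_smult_assoc)
  from eigenvalue_norm_le_rho[OF M z this] have "cmod l / s \<le> rho M"
    using s by (simp add: norm_mult norm_divide)
  then show ?thesis using nl s by (simp add: pos_divide_le_eq mult.commute)
qed

lemma pow_mat_smult:
  "B \<in> carrier_mat m m \<Longrightarrow> (q \<cdot>\<^sub>m (B::real mat)) ^\<^sub>m k = (q ^ k) \<cdot>\<^sub>m (B ^\<^sub>m k)"
proof (induction k)
  case 0 then show ?case by (auto intro!: eq_matI)
next
  case (Suc k)
  have "(q \<cdot>\<^sub>m B) ^\<^sub>m Suc k = ((q ^ k) \<cdot>\<^sub>m (B ^\<^sub>m k)) * (q \<cdot>\<^sub>m B)" using Suc by simp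
  also have "\<dots> = (q ^ Suc k) \<cdot>\<^sub>m (B ^\<^sub>m Suc k)" using Suc.prems
    by (simp add: mult_smult_assoc_mat[of _ m m _ m] mult_smult_distrib[of _ m m _ m] mult.commute;
        auto intro!: eq_matI)
  finally show ?case .
qed

lemma pow_mat_commute: "W \<in> carrier_mat m m \<Longrightarrow> (W::real mat) ^\<^sub>m k * W = W * W ^\<^sub>m k"
proof (induction k)
  case (Suc k)
  have "W ^\<^sub>m Suc k * W = (W * W ^\<^sub>m k) * W" using Suc by simp
  also have "\<dots> = W * W ^\<^sub>m Suc k" using Suc.prems by (simp add: assoc_mult_mat[of _ m m _ m _ m])
  finally show ?case .
qed simp

lemma mat_nonneg_pow: "W \<in> carrier_mat m m \<Longrightarrow> mat_nonneg W \<Longrightarrow> mat_nonneg (W ^\<^sub>m k)"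
proof (induction k)
  case 0 then show ?case unfolding mat_nonneg_def by auto
next
  case (Suc k)
  have P: "W ^\<^sub>m k \<in> carrier_mat m m" using Suc.prems by simp
  show ?case unfolding mat_nonneg_def
  proof (intro allI impI)
    fix i j assume "i < dim_row (W ^\<^sub>m Suc k)" and "j < dim_col (W ^\<^sub>m Suc k)"
    then have i: "i < m" and j: "j < m" using Suc.prems by auto
    have "0 \<le> (\<Sum>l<m. (W ^\<^sub>m k) $$ (i,l) * W $$ (l,j))"
      using Suc.IH[OF Suc.prems] Suc.prems i j unfolding mat_nonneg_def
      by (intro sum_nonneg mult_nonneg_nonneg) auto
    then show "0 \<le> (W ^\<^sub>m Suc k) $$ (i,j)"
      using mult_mat_index_sum[OF P i Suc.prems(1) j] by simp
  qed
qed

lemma rho_less_1_pow_bounded: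
  fixes M :: "real mat"
  assumes M: "M \<in> carrier_mat n n" and r: "rho M < 1"
  obtains c where "\<And>k i j. i < n \<Longrightarrow> j < n \<Longrightarrow> \<bar>(M ^\<^sub>m k) $$ (i,j)\<bar> \<le> c"
proof -
  have Mc: "of_real_mat M \<in> carrier_mat n n" using M by simp
  from spectral_radius_jnf_norm_bound_less_1_upper_triangular[OF Mc] r
  obtain c where c: "\<And>k. norm_bound (of_real_mat M ^\<^sub>m k) c" unfolding rho_def by blast
  have "\<bar>(M ^\<^sub>m k) $$ (i,j)\<bar> \<le> c" if i: "i < n" and j: "j < n" for k i j
  proof -
    have "of_real_mat (M ^\<^sub>m k) = of_real_mat M ^\<^sub>m k" by (rule of_real_hom.mat_hom_pow[OF M])
    then have "\<bar>(M ^\<^sub>m k) $$ (i,j)\<bar> = norm ((of_real_mat M ^\<^sub>m k) $$ (i,j))"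
      using i j M by (metis index_map_mat norm_of_real pow_mat_dim_square)
    also have "\<dots> \<le> c" using c[of k] i j Mc unfolding norm_bound_def by auto
    finally show ?thesis .
  qed
  then show ?thesis using that by blast
qed

lemma rho_less_1_pow_small:
  fixes M :: "real mat"
  assumes M: "M \<in> carrier_mat n n" and n: "n > 0" and r: "rho M < 1" and e: "e > 0"
  obtains K where "K > 0" and "\<And>i j. i < n \<Longrightarrow> j < n \<Longrightarrow> \<bar>(M ^\<^sub>m K) $$ (i,j)\<bar> \<le> e"
proof -
  define s where "s = (rho M + 1) / 2"
  have s0: "0 < s" and rs: "rho M < s" and s1: "s < 1"
    using r rho_nonneg[OF M n] unfolding s_def by auto
  define B where "B = (1 / s) \<cdot>\<^sub>m M"
  have B: "B \<in> carrier_mat n n" unfolding B_def using M by simp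
  have "rho B \<le> rho M / s" using rho_smult_le[OF M n, of "1 / s"] s0 unfolding B_def by simp
  also have "\<dots> < 1" using rs s0 by simp
  finally obtain c where c: "\<And>k i j. i < n \<Longrightarrow> j < n \<Longrightarrow> \<bar>(B ^\<^sub>m k) $$ (i,j)\<bar> \<le> c"
    using rho_less_1_pow_bounded[OF B] by blast
  have c0: "0 \<le> c" using c[of 0 0 0] n by (meson abs_ge_zero order.trans)
  obtain K0 where K0: "s ^ K0 < e / (c + 1)"
    using real_arch_pow_inv[of "e / (c + 1)" s] s1 e c0 by auto
  have MsB: "M = s \<cdot>\<^sub>m B" unfolding B_def using s0 M by (auto intro!: eq_matI)
  have "\<bar>(M ^\<^sub>m Suc K0) $$ (i,j)\<bar> \<le> e" if i: "i < n" and j: "j < n" for i j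
  proof -
    have "\<bar>(M ^\<^sub>m Suc K0) $$ (i,j)\<bar> = s ^ Suc K0 * \<bar>(B ^\<^sub>m Suc K0) $$ (i,j)\<bar>"
      unfolding MsB pow_mat_smult[OF B] using i j B s0 by (simp add: abs_mult)
    also have "\<dots> \<le> s ^ K0 * (c + 1)"
      using c[OF i j, of "Suc K0"] s0 s1 c0
      by (intro mult_mono) (auto simp: power_le_imp_le_exp mult_left_le_one_le)
    also have "\<dots> \<le> e" using K0 c0 by (simp add: pos_less_divide_eq less_imp_le)
    finally show ?thesis .
  qed
  then show ?thesis using that[of "Suc K0"] by blast
qed

lemma nonneg_mat_superinvariant_vector:
  fixes M :: "real mat"
  assumes M: "M \<in> carrier_mat n n" and n: "n > 0" and nn: "mat_nonneg M"
  obtains x where "x \<in> carrier_vec n" "\<forall>i<n. 0 \<le> x $ i" "x \<noteq> 0\<^sub>v n"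
    "\<forall>i<n. rho M * x $ i \<le> (M *\<^sub>v x) $ i"
proof -
  obtain l z where z: "z \<in> carrier_vec n" "z \<noteq> 0\<^sub>v n"
    and ev: "of_real_mat M *\<^sub>v z = l \<cdot>\<^sub>v z" and nl: "cmod l = rho M"
    using rho_eigenvalue[OF M n] by blast
  define x where "x = vec n (\<lambda>i. cmod (z $ i))"
  have x: "x \<in> carrier_vec n" unfolding x_def by simp
  have Mc: "of_real_mat M \<in> carrier_mat n n" using M by simp
  have super: "rho M * x $ i \<le> (M *\<^sub>v x) $ i" if i: "i < n" for i
  proof -
    have "rho M * x $ i = cmod ((l \<cdot>\<^sub>v z) $ i)" using i z nl unfolding x_def by (simp add: norm_mult)
    also have "\<dots> = cmod (\<Sum>k<n. of_real_mat M $$ (i,k) * z $ k)"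
      using ev mult_mat_vec_index_sum[OF Mc i z(1)] by simp
    also have "\<dots> \<le> (\<Sum>k<n. cmod (of_real_mat M $$ (i,k) * z $ k))" by (rule norm_sum)
    also have "\<dots> = (\<Sum>k<n. M $$ (i,k) * x $ k)"
      using i M nn unfolding mat_nonneg_def by (auto simp: x_def norm_mult intro!: sum.cong)
    also have "\<dots> = (M *\<^sub>v x) $ i" by (rule mult_mat_vec_index_sum[OF M i x, symmetric])
    finally show ?thesis .
  qed
  have "x \<noteq> 0\<^sub>v n"
  proof
    assume "x = 0\<^sub>v n"
    then have "z = 0\<^sub>v n" using z unfolding x_def by (auto simp: vec_eq_iff)
    then show False using z by simp
  qed
  moreover have "\<forall>i<n. 0 \<le> x $ i" unfolding x_def by simp
  ultimately show ?thesis using that x super by blast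
qed

text \<open>The partial Neumann sum \<open>v = \<Sum>\<^bsub>l<K\<^esub> W\<^sup>l \<one>\<close> satisfies \<open>W v = v - \<one> + W\<^sup>K \<one>\<close>.\<close>

lemma nonneg_mat_neumann_subinvariant_vector:
  fixes W :: "real mat"
  assumes W: "W \<in> carrier_mat n n" and n: "n > 0" and nn: "mat_nonneg W" and K: "K > 0"
    and WK: "\<forall>i<n. (W ^\<^sub>m K *\<^sub>v vec n (\<lambda>_. 1)) $ i \<le> 1"
  obtains v where "v \<in> carrier_vec n" "\<forall>i<n. 0 \<le> v $ i" "v \<noteq> 0\<^sub>v n"
    "\<forall>i<n. (W *\<^sub>v v) $ i \<le> v $ i"
proof -
  define d where "d l = W ^\<^sub>m l *\<^sub>v vec n (\<lambda>_. 1)" for l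
  have d: "d l \<in> carrier_vec n" for l
    unfolding d_def using W by (metis mult_mat_vec_carrier pow_carrier_mat vec_carrier)
  have dnn: "0 \<le> d l $ i" if i: "i < n" for l i
  proof -
    have "d l $ i = (\<Sum>j<n. (W ^\<^sub>m l) $$ (i,j) * 1)" unfolding d_def
      by (subst mult_mat_vec_index_sum[of _ n n]) (use W i in auto)
    also have "\<dots> \<ge> 0" using mat_nonneg_pow[OF W nn, of l] W i unfolding mat_nonneg_def
      by (intro sum_nonneg) auto
    finally show ?thesis .
  qed
  have d0: "d 0 $ i = 1" if "i < n" for i unfolding d_def using W that by simp
  have dSuc: "W *\<^sub>v d l = d (Suc l)" for l
  proof -
    have "W *\<^sub>v d l = (W * W ^\<^sub>m l) *\<^sub>v vec n (\<lambda>_. 1)" unfolding d_def using W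
      by (simp add: assoc_mult_mat_vec[of _ n n _ n])
    then show ?thesis unfolding d_def using pow_mat_commute[OF W, of l] by simp
  qed
  define v where "v = vec n (\<lambda>i. \<Sum>l<K. d l $ i)"
  have Wv: "(W *\<^sub>v v) $ i = (\<Sum>l<K. d (Suc l) $ i)" if i: "i < n" for i
  proof -
    have "(W *\<^sub>v v) $ i = (\<Sum>j<n. \<Sum>l<K. W $$ (i,j) * d l $ j)"
      unfolding v_def mult_mat_vec_index_sum[OF W i vec_carrier]
      by (auto simp: sum_distrib_left intro!: sum.cong)
    also have "\<dots> = (\<Sum>l<K. (W *\<^sub>v d l) $ i)"
      by (subst sum.swap) (simp add: mult_mat_vec_index_sum[OF W i d])
    finally show ?thesis using dSuc by simp
  qed
  have "(W *\<^sub>v v) $ i \<le> v $ i" if i: "i < n" for i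
  proof -
    have "(\<Sum>l<K. d (Suc l) $ i) + d 0 $ i = (\<Sum>l<K. d l $ i) + d K $ i"
      using sum.lessThan_Suc_shift[of "\<lambda>l. d l $ i" K] by simp
    moreover have "d K $ i \<le> 1" using WK i unfolding d_def by simp
    moreover have "v $ i = (\<Sum>l<K. d l $ i)" unfolding v_def using i by simp
    ultimately show ?thesis using Wv[OF i] d0[OF i] by linarith
  qed
  moreover have "\<forall>i<n. 0 \<le> v $ i" unfolding v_def using dnn by (auto intro!: sum_nonneg)
  moreover have "v \<noteq> 0\<^sub>v n"
  proof
    assume "v = 0\<^sub>v n"
    moreover have "d 0 $ 0 \<le> v $ 0"
      unfolding v_def using n K dnn[OF n] by (auto intro!: member_le_sum)
    ultimately show False using d0[OF n] n by simp
  qed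
  ultimately show ?thesis using that[of v] unfolding v_def by auto
qed

lemma nonneg_mat_subinvariant_vector:
  fixes S :: "real mat"
  assumes S: "S \<in> carrier_mat n n" and n: "n > 0" and nn: "mat_nonneg S" and t: "rho S < t"
  obtains v where "v \<in> carrier_vec n" "\<forall>i<n. 0 \<le> v $ i" "v \<noteq> 0\<^sub>v n"
    "\<forall>i<n. (S *\<^sub>v v) $ i \<le> t * v $ i"
proof -
  have t0: "t > 0" using rho_nonneg[OF S n] t by simp
  define W where "W = (1 / t) \<cdot>\<^sub>m S"
  have W: "W \<in> carrier_mat n n" unfolding W_def using S by simp
  have Wnn: "mat_nonneg W" using nn t0 S unfolding W_def mat_nonneg_def by auto
  have "rho W \<le> rho S / t" using rho_smult_le[OF S n, of "1 / t"] t0 unfolding W_def by simp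
  also have "\<dots> < 1" using t t0 by simp
  finally obtain K where K: "K > 0" and WK: "\<And>i j. i < n \<Longrightarrow> j < n \<Longrightarrow> \<bar>(W ^\<^sub>m K) $$ (i,j)\<bar> \<le> 1 / n"
    using rho_less_1_pow_small[OF W n, of "1 / n"] n by auto
  have "(W ^\<^sub>m K *\<^sub>v vec n (\<lambda>_. 1)) $ i \<le> 1" if i: "i < n" for i
  proof -
    have "(W ^\<^sub>m K *\<^sub>v vec n (\<lambda>_. 1)) $ i = (\<Sum>j<n. (W ^\<^sub>m K) $$ (i,j) * 1)"
      by (subst mult_mat_vec_index_sum[of _ n n]) (use W i in auto)
    also have "\<dots> \<le> (\<Sum>j<n. 1 / real n)" using WK[OF i] by (intro sum_mono) (simp add: abs_le_iff)
    also have "\<dots> = 1" using n by simp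
    finally show ?thesis .
  qed
  then obtain v where v: "v \<in> carrier_vec n" "\<forall>i<n. 0 \<le> v $ i" "v \<noteq> 0\<^sub>v n"
    and Wv: "\<forall>i<n. (W *\<^sub>v v) $ i \<le> v $ i"
    using nonneg_mat_neumann_subinvariant_vector[OF W n Wnn K] by blast
  have SW: "S = t \<cdot>\<^sub>m W" unfolding W_def using t0 S by (auto intro!: eq_matI)
  have "(S *\<^sub>v v) $ i \<le> t * v $ i" if i: "i < n" for i
    using smult_mat_mult_mat_vec[OF W v(1), of t] Wv i W t0 unfolding SW by simp
  then show ?thesis using that v by blast
qed

subsection \<open>Comparison of the spectral radii\<close>

lemma scalar_prod_mult_mat_vec_sum:
  "M \<in> carrier_mat n m \<Longrightarrow> u \<in> carrier_vec n \<Longrightarrow> v \<in> carrier_vec m \<Longrightarrow>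
   u \<bullet> ((M::real mat) *\<^sub>v v) = (\<Sum>i<n. \<Sum>j<m. u $ i * M $$ (i,j) * v $ j)"
proof -
  assume M: "M \<in> carrier_mat n m" and u: "u \<in> carrier_vec n" and v: "v \<in> carrier_vec m"
  have "u \<bullet> (M *\<^sub>v v) = (\<Sum>i<n. u $ i * (M *\<^sub>v v) $ i)"
    by (rule scalar_prod_sum_lessThan) (use M v in auto)
  also have "\<dots> = (\<Sum>i<n. u $ i * (\<Sum>j<m. M $$ (i,j) * v $ j))"
    by (intro sum.cong refl, subst mult_mat_vec_index_sum[OF M _ v]) auto
  also have "\<dots> = (\<Sum>i<n. \<Sum>j<m. u $ i * M $$ (i,j) * v $ j)"
    by (simp add: sum_distrib_left mult.assoc)
  finally show ?thesis .
qed

lemma scalar_prod_mult_mat_vec_mono: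
  fixes M N :: "real mat"
  assumes M: "M \<in> carrier_mat n m" and N: "N \<in> carrier_mat n m" and u: "u \<in> carrier_vec n"
    and v: "v \<in> carrier_vec m" and un: "\<forall>i<n. 0 \<le> u $ i" and vn: "\<forall>j<m. 0 \<le> v $ j"
    and le: "\<And>i j. i < n \<Longrightarrow> j < m \<Longrightarrow> M $$ (i,j) \<le> N $$ (i,j)"
  shows "u \<bullet> (M *\<^sub>v v) \<le> u \<bullet> (N *\<^sub>v v)"
  unfolding scalar_prod_mult_mat_vec_sum[OF M u v] scalar_prod_mult_mat_vec_sum[OF N u v]
  using un vn le by (intro sum_mono mult_right_mono mult_left_mono) auto

lemma scalar_prod_mult_mat_vec_strict_mono:
  fixes M N :: "real mat"
  assumes M: "M \<in> carrier_mat n m" and N: "N \<in> carrier_mat n m" and u: "u \<in> carrier_vec n"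
    and v: "v \<in> carrier_vec m" and un: "\<forall>i<n. 0 \<le> u $ i" and vn: "\<forall>j<m. 0 \<le> v $ j"
    and u0: "u \<noteq> 0\<^sub>v n" and v0: "v \<noteq> 0\<^sub>v m"
    and lt: "\<And>i j. i < n \<Longrightarrow> j < m \<Longrightarrow> M $$ (i,j) < N $$ (i,j)"
  shows "u \<bullet> (M *\<^sub>v v) < u \<bullet> (N *\<^sub>v v)"
proof -
  obtain i0 where i0: "i0 < n" "u $ i0 \<noteq> 0" using u u0 by (auto simp: vec_eq_iff)
  obtain j0 where j0: "j0 < m" "v $ j0 \<noteq> 0" using v v0 by (auto simp: vec_eq_iff)
  have ui: "u $ i0 > 0" using i0 un by (simp add: order_le_neq_trans)
  have vj: "v $ j0 > 0" using j0 vn by (simp add: order_le_neq_trans)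
  have nn: "0 \<le> u $ i * (N $$ (i,j) - M $$ (i,j)) * v $ j" if "i < n" "j < m" for i j
    using that un vn lt[of i j] by simp
  have "(\<Sum>i<n. \<Sum>j<m. u $ i * N $$ (i,j) * v $ j) - (\<Sum>i<n. \<Sum>j<m. u $ i * M $$ (i,j) * v $ j)
      = (\<Sum>i<n. \<Sum>j<m. u $ i * (N $$ (i,j) - M $$ (i,j)) * v $ j)"
    by (simp add: sum_subtractf[symmetric] algebra_simps)
  also have "0 < (\<Sum>i<n. \<Sum>j<m. u $ i * (N $$ (i,j) - M $$ (i,j)) * v $ j)"
  proof (rule sum_pos2[of _ i0])
    show "0 < (\<Sum>j<m. u $ i0 * (N $$ (i0,j) - M $$ (i0,j)) * v $ j)"
      by (rule sum_pos2[of _ j0]) (use ui vj lt[OF i0(1) j0(1)] nn i0 j0 in auto)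
  qed (use i0 nn in \<open>auto intro!: sum_nonneg\<close>)
  finally show ?thesis
    unfolding scalar_prod_mult_mat_vec_sum[OF M u v] scalar_prod_mult_mat_vec_sum[OF N u v] by simp
qed

lemma mult_mat_vec_nonneg_mono:
  fixes M :: "real mat"
  assumes M: "M \<in> carrier_mat n m" "mat_nonneg M" and x: "x \<in> carrier_vec m"
    and y: "y \<in> carrier_vec m" and le: "\<forall>j<m. x $ j \<le> y $ j" and i: "i < n"
  shows "(M *\<^sub>v x) $ i \<le> (M *\<^sub>v y) $ i"
  unfolding mult_mat_vec_index_sum[OF M(1) i x] mult_mat_vec_index_sum[OF M(1) i y]
  using M le i unfolding mat_nonneg_def by (intro sum_mono mult_left_mono) auto

lemma scalar_prod_nonneg_mono:
  fixes u x y :: "real vec"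
  assumes "x \<in> carrier_vec n" "y \<in> carrier_vec n" "\<forall>i<n. 0 \<le> u $ i" "\<forall>i<n. x $ i \<le> y $ i"
  shows "u \<bullet> x \<le> u \<bullet> y"
  using assms by (auto simp: scalar_prod_sum_lessThan[of _ n] intro!: sum_mono mult_left_mono)

lemma scalar_prod_minus_mult_mat_vec_le:
  fixes T :: "real mat"
  assumes T: "T \<in> carrier_mat n n" and u: "u \<in> carrier_vec n" and w: "w \<in> carrier_vec n"
    and wn: "\<forall>i<n. 0 \<le> w $ i" and uT: "\<forall>i<n. r * u $ i \<le> (transpose_mat T *\<^sub>v u) $ i"
  shows "u \<bullet> (w - T *\<^sub>v w) \<le> (1 - r) * (u \<bullet> w)"
proof -
  have "r * (u \<bullet> w) = w \<bullet> (r \<cdot>\<^sub>v u)" using u w by (simp add: comm_scalar_prod[of u n w])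
  also have "\<dots> \<le> w \<bullet> (transpose_mat T *\<^sub>v u)"
    by (rule scalar_prod_nonneg_mono[of _ n]) (use T u wn uT in auto)
  also have "\<dots> = u \<bullet> (T *\<^sub>v w)"
    using transpose_vec_mult_scalar[OF T w u] comm_scalar_prod[of w n "transpose_mat T *\<^sub>v u"] T u w
    by simp
  finally show ?thesis using T u w by (simp add: scalar_prod_minus_distrib[of _ n] algebra_simps)
qed

lemma scalar_prod_mult_minus_mult_ge:
  fixes G S :: "real mat"
  assumes G: "G \<in> carrier_mat n m" "mat_nonneg G" and S: "S \<in> carrier_mat m m"
    and u: "u \<in> carrier_vec n" and v: "v \<in> carrier_vec m" and un: "\<forall>i<n. 0 \<le> u $ i"
    and Sv: "\<forall>j<m. (S *\<^sub>v v) $ j \<le> t * v $ j"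
  shows "(1 - t) * (u \<bullet> (G *\<^sub>v v)) \<le> u \<bullet> ((G - G * S) *\<^sub>v v)"
proof -
  have "u \<bullet> (G *\<^sub>v (S *\<^sub>v v)) \<le> u \<bullet> (G *\<^sub>v (t \<cdot>\<^sub>v v))"
    by (rule scalar_prod_nonneg_mono[of _ n])
       (use G S v un Sv mult_mat_vec_nonneg_mono[OF G, of "S *\<^sub>v v" "t \<cdot>\<^sub>v v"] in auto)
  also have "\<dots> = t * (u \<bullet> (G *\<^sub>v v))" using G u v by (simp add: mult_mat_vec)
  finally show ?thesis using G S u v
    by (simp add: minus_mult_distrib_mat_vec[of _ n m] assoc_mult_mat_vec[of _ n m _ m]
        scalar_prod_minus_distrib[of _ n] algebra_simps)
qed

lemma mat_gt_test_vectors: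
  fixes G T S :: "real mat" and a r t :: real
  assumes G: "G \<in> carrier_mat n m" "mat_nonneg G"
    and T: "T \<in> carrier_mat n n" and S: "S \<in> carrier_mat m m"
    and gt: "mat_gt (G - T * G) (G - G * S)" and le: "mat_le (G - G * S) (a \<cdot>\<^sub>m (G - T * G))"
    and a: "0 \<le> a"
    and u: "u \<in> carrier_vec n" "\<forall>i<n. 0 \<le> u $ i" "u \<noteq> 0\<^sub>v n"
    and uT: "\<forall>i<n. r * u $ i \<le> (transpose_mat T *\<^sub>v u) $ i"
    and v: "v \<in> carrier_vec m" "\<forall>i<m. 0 \<le> v $ i" "v \<noteq> 0\<^sub>v m"
    and Sv: "\<forall>i<m. (S *\<^sub>v v) $ i \<le> t * v $ i"
  shows "1 - t \<le> a * (1 - r)"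
proof -
  define P1 P2 where "P1 = G - T * G" and "P2 = G - G * S"
  have P: "P1 \<in> carrier_mat n m" "P2 \<in> carrier_mat n m" using G T S unfolding P1_def P2_def by auto
  have gt': "mat_gt P1 P2" and le': "mat_le P2 (a \<cdot>\<^sub>m P1)"
    using gt le unfolding P1_def P2_def by auto
  have w: "G *\<^sub>v v \<in> carrier_vec n" "\<forall>i<n. 0 \<le> (G *\<^sub>v v) $ i"
    using G v mult_mat_vec_nonneg_mono[OF G, of "0\<^sub>v m" v] by auto
  define X where "X = u \<bullet> (G *\<^sub>v v)"
  have "P1 *\<^sub>v v = G *\<^sub>v v - T *\<^sub>v (G *\<^sub>v v)" unfolding P1_def using G T v
    by (simp add: minus_mult_distrib_mat_vec[of _ n m] assoc_mult_mat_vec[of _ n n _ m])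
  then have q1: "u \<bullet> (P1 *\<^sub>v v) \<le> (1 - r) * X"
    unfolding X_def using scalar_prod_minus_mult_mat_vec_le[OF T u(1) w uT] by simp
  have q2: "(1 - t) * X \<le> u \<bullet> (P2 *\<^sub>v v)"
    unfolding X_def P2_def by (rule scalar_prod_mult_minus_mult_ge[OF G S u(1) v(1) u(2) Sv])
  have q12: "u \<bullet> (P2 *\<^sub>v v) < u \<bullet> (P1 *\<^sub>v v)"
    by (rule scalar_prod_mult_mat_vec_strict_mono[OF P(2) P(1) u(1) v(1) u(2) v(2) u(3) v(3)])
       (use gt' P in \<open>auto simp: mat_gt_def\<close>)
  have "u \<bullet> (P2 *\<^sub>v v) \<le> u \<bullet> ((a \<cdot>\<^sub>m P1) *\<^sub>v v)"
    by (rule scalar_prod_mult_mat_vec_mono[OF P(2) _ u(1) v(1) u(2) v(2)])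
       (use le' P in \<open>auto simp: mat_le_def\<close>)
  also have "\<dots> = a * (u \<bullet> (P1 *\<^sub>v v))"
    using smult_mat_mult_mat_vec[OF P(1) v(1), of a] u P v by simp
  also have "\<dots> \<le> a * ((1 - r) * X)" using q1 a by (intro mult_left_mono) auto
  finally have "(1 - t) * X \<le> a * ((1 - r) * X)" by (rule order_trans[OF q2])
  then have q2a: "(1 - t) * X \<le> (a * (1 - r)) * X" by (simp add: mult.assoc)
  have "0 \<le> X"
    unfolding X_def using scalar_prod_nonneg_mono[of "0\<^sub>v n" n "G *\<^sub>v v" u] u w by simp
  moreover have "X \<noteq> 0" using q1 q2 q12 by auto
  ultimately have "0 < X" by simp
  with q2a show ?thesis by (simp add: mult_right_le_imp_le)
qed

lemma rho_less_of_mat_gt: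
  fixes G T S :: "real mat" and a :: real
  assumes G: "G \<in> carrier_mat n m" "mat_nonneg G"
    and T: "T \<in> carrier_mat n n" "mat_nonneg T" and S: "S \<in> carrier_mat m m" "mat_nonneg S"
    and gt: "mat_gt (G - T * G) (G - G * S)" and le: "mat_le (G - G * S) (a \<cdot>\<^sub>m (G - T * G))"
    and a: "0 \<le> a" "a < 1" and n: "n > 0" and m: "m > 0" and rT: "rho T < 1"
  shows "rho T < rho S"
proof (rule ccontr)
  assume "\<not> rho T < rho S"
  moreover have "0 < (1 - a) * (1 - rho T)" using a rT by simp
  moreover have "(1 - a) * (1 - rho T) = 1 - a * (1 - rho T) - rho T" by (simp add: algebra_simps)
  ultimately have "rho S < 1 - a * (1 - rho T)" by linarith
  then obtain t where tS: "rho S < t" and ta: "t < 1 - a * (1 - rho T)" using dense by blast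
  have TT: "transpose_mat T \<in> carrier_mat n n" "mat_nonneg (transpose_mat T)"
    using T unfolding mat_nonneg_def by auto
  obtain u where u: "u \<in> carrier_vec n" "\<forall>i<n. 0 \<le> u $ i" "u \<noteq> 0\<^sub>v n"
    and uT: "\<forall>i<n. rho T * u $ i \<le> (transpose_mat T *\<^sub>v u) $ i"
    using nonneg_mat_superinvariant_vector[OF TT(1) n TT(2)] rho_transpose[OF T(1)] by metis
  obtain v where v: "v \<in> carrier_vec m" "\<forall>i<m. 0 \<le> v $ i" "v \<noteq> 0\<^sub>v m"
    and Sv: "\<forall>i<m. (S *\<^sub>v v) $ i \<le> t * v $ i"
    using nonneg_mat_subinvariant_vector[OF S(1) m S(2) tS] by blast
  have "1 - t \<le> a * (1 - rho T)"
    by (rule mat_gt_test_vectors[OF G T(1) S(1) gt le a(1) u uT v Sv])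
  then show False using ta by simp
qed

lemma rho_less_of_mat_gt_transposed:
  fixes G T S :: "real mat" and a :: real
  assumes G: "G \<in> carrier_mat n m" "mat_nonneg G"
    and T: "T \<in> carrier_mat n n" "mat_nonneg T" and S: "S \<in> carrier_mat m m" "mat_nonneg S"
    and gt: "mat_gt (G - G * S) (G - T * G)" and le: "mat_le (G - T * G) (a \<cdot>\<^sub>m (G - G * S))"
    and a: "0 \<le> a" "a < 1" and n: "n > 0" and m: "m > 0" and rS: "rho S < 1"
  shows "rho S < rho T"
proof -
  have tr: "transpose_mat (G - G * S) = transpose_mat G - transpose_mat S * transpose_mat G"
    "transpose_mat (G - T * G) = transpose_mat G - transpose_mat G * transpose_mat T"
    using G T S by (auto intro!: eq_matI simp: transpose_mult[symmetric])
  have "rho (transpose_mat S) < rho (transpose_mat T)"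
  proof (rule rho_less_of_mat_gt[of _ m n])
    show "mat_gt (transpose_mat G - transpose_mat S * transpose_mat G)
        (transpose_mat G - transpose_mat G * transpose_mat T)"
      using gt unfolding tr[symmetric] mat_gt_def by auto
    show "mat_le (transpose_mat G - transpose_mat G * transpose_mat T)
        (a \<cdot>\<^sub>m (transpose_mat G - transpose_mat S * transpose_mat G))"
      using le unfolding tr[symmetric] mat_le_def by auto
  qed (use G T S a n m rS rho_transpose[OF S(1)] in \<open>auto simp: mat_nonneg_def\<close>)
  then show ?thesis using rho_transpose[OF S(1)] rho_transpose[OF T(1)] by simp
qed

lemma mat_gt_imp_mat_le_smult:
  fixes P1 P2 :: "real mat"
  assumes gt: "mat_gt P1 P2"
  obtains a where "0 < a" "a < 1" "mat_le P2 (a \<cdot>\<^sub>m P1)"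
proof -
  define n m where "n = dim_row P1" and "m = dim_col P1"
  have d: "dim_row P2 = n" "dim_col P2 = m"
    and lt: "\<And>i j. i < n \<Longrightarrow> j < m \<Longrightarrow> P2 $$ (i,j) < P1 $$ (i,j)"
    using gt unfolding mat_gt_def n_def m_def by auto
  define R where "R = (\<lambda>(i,j). P2 $$ (i,j) / P1 $$ (i,j)) ` {(i,j). i < n \<and> j < m \<and> 0 < P1 $$ (i,j)}"
  have fR: "finite (insert (1/2) R)"
    unfolding R_def by (auto intro: finite_subset[of _ "{..<n} \<times> {..<m}"])
  \<comment> \<open>\<open>1/2\<close> keeps the set nonempty and \<open>a\<close> positive\<close>
  define a where "a = Max (insert (1/2) R)"
  have a2: "1/2 \<le> a" unfolding a_def by (rule Max_ge[OF fR]) simp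
  have a1: "a < 1" unfolding a_def using Max_in[OF fR] lt by (auto simp: R_def divide_less_eq)
  have "P2 $$ (i,j) \<le> a * P1 $$ (i,j)" if i: "i < n" and j: "j < m" for i j
  proof (cases "0 < P1 $$ (i,j)")
    case True
    then have "P2 $$ (i,j) / P1 $$ (i,j) \<in> insert (1/2) R" unfolding R_def using i j by force
    then have "P2 $$ (i,j) / P1 $$ (i,j) \<le> a" unfolding a_def by (rule Max_ge[OF fR])
    then show ?thesis using True by (simp add: divide_le_eq)
  next
    case False
    then show ?thesis using lt[OF i j] a1 by (smt (verit) mult_le_cancel_right1)
  qed
  then have "mat_le P2 (a \<cdot>\<^sub>m P1)" using d unfolding mat_le_def n_def m_def by auto
  moreover have "0 < a" using a2 by linarith
  ultimately show ?thesis using that a1 by blast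
qed

lemma rho_less_of_splittings_I_II:
  assumes A: "A \<in> carrier_mat m n" and m: "m > 0" and n: "n > 0"
    and Gnn: "mat_nonneg (MP_inverse A)"
    and s1: "proper_nonneg_splitting_I A U1 V1" and s2: "proper_nonneg_splitting_II A U2 V2"
    and c1: "convergent_splitting U1 V1" and gt: "mat_gt (MP_inverse U1) (MP_inverse U2)"
    and a: "0 \<le> a" "a < 1" and le: "mat_le (MP_inverse U2) (a \<cdot>\<^sub>m MP_inverse U1)"
  shows "rho (MP_inverse U1 * V1) < rho (MP_inverse U2 * V2)"
proof -
  have ps: "proper_splitting A U1 V1" "proper_splitting A U2 V2"
    and nn: "mat_nonneg (MP_inverse U1 * V1)" "mat_nonneg (V2 * MP_inverse U2)"
    using s1 s2 unfolding proper_nonneg_splitting_I_def proper_nonneg_splitting_II_def by auto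
  have dims: "U1 \<in> carrier_mat m n" "V1 \<in> carrier_mat m n"
    "U2 \<in> carrier_mat m n" "V2 \<in> carrier_mat m n"
    using proper_splitting_carrier[OF ps(1) A] proper_splitting_carrier[OF ps(2) A] by auto
  note H = MP_inverse_carrier[OF A] MP_inverse_carrier[OF dims(1)] MP_inverse_carrier[OF dims(3)]
  have "rho (MP_inverse U1 * V1) < rho (V2 * MP_inverse U2)"
    by (rule rho_less_of_mat_gt[of "MP_inverse A" n m _ _ a])
      (use H dims Gnn nn gt le a n m c1 proper_splitting_MP_inverse_eqs(1)[OF ps(1)]
           proper_splitting_MP_inverse_eqs(2)[OF ps(2)] in \<open>auto simp: convergent_splitting_def\<close>)
  also have "\<dots> = rho (MP_inverse U2 * V2)" by (rule rho_mult_commute[OF dims(4) H(3) m n])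
  finally show ?thesis .
qed

lemma rho_less_of_splittings_II_I:
  assumes A: "A \<in> carrier_mat m n" and m: "m > 0" and n: "n > 0"
    and Gnn: "mat_nonneg (MP_inverse A)"
    and s1: "proper_nonneg_splitting_II A U1 V1" and s2: "proper_nonneg_splitting_I A U2 V2"
    and c1: "convergent_splitting U1 V1" and gt: "mat_gt (MP_inverse U1) (MP_inverse U2)"
    and a: "0 \<le> a" "a < 1" and le: "mat_le (MP_inverse U2) (a \<cdot>\<^sub>m MP_inverse U1)"
  shows "rho (MP_inverse U1 * V1) < rho (MP_inverse U2 * V2)"
proof -
  have ps: "proper_splitting A U1 V1" "proper_splitting A U2 V2"
    and nn: "mat_nonneg (V1 * MP_inverse U1)" "mat_nonneg (MP_inverse U2 * V2)"
    using s1 s2 unfolding proper_nonneg_splitting_I_def proper_nonneg_splitting_II_def by auto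
  have dims: "U1 \<in> carrier_mat m n" "V1 \<in> carrier_mat m n"
    "U2 \<in> carrier_mat m n" "V2 \<in> carrier_mat m n"
    using proper_splitting_carrier[OF ps(1) A] proper_splitting_carrier[OF ps(2) A] by auto
  note H = MP_inverse_carrier[OF A] MP_inverse_carrier[OF dims(1)] MP_inverse_carrier[OF dims(3)]
  have r: "rho (MP_inverse U1 * V1) = rho (V1 * MP_inverse U1)"
    by (rule rho_mult_commute[OF H(2) dims(2) n m])
  have "rho (V1 * MP_inverse U1) < rho (MP_inverse U2 * V2)"
    by (rule rho_less_of_mat_gt_transposed[of "MP_inverse A" n m _ _ a])
      (use H dims Gnn nn gt le a n m c1 r proper_splitting_MP_inverse_eqs(2)[OF ps(1)]
           proper_splitting_MP_inverse_eqs(1)[OF ps(2)] in \<open>auto simp: convergent_splitting_def\<close>)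
  then show ?thesis using r by simp
qed

theorem theorem4p9:
  fixes A U1 V1 U2 V2 :: "real mat" and m n :: nat
  assumes "m > 0" and "n > 0"
    and "A \<in> carrier_mat m n"
    and "mat_nonneg (MP_inverse A)"
    and "(proper_nonneg_splitting_I A U1 V1 \<and> proper_nonneg_splitting_II A U2 V2) \<or>
         (proper_nonneg_splitting_II A U1 V1 \<and> proper_nonneg_splitting_I A U2 V2)"
    and "convergent_splitting U1 V1" and "convergent_splitting U2 V2"
    and "mat_gt (MP_inverse U1) (MP_inverse U2)"
  shows "(\<exists>\<alpha>::real. 0 < \<alpha> \<and> \<alpha> < 1 \<and> mat_le (MP_inverse U2) (\<alpha> \<cdot>\<^sub>m MP_inverse U1)) \<and>
         rho (MP_inverse U1 * V1) < rho (MP_inverse U2 * V2) \<and>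
         rho (MP_inverse U2 * V2) < 1"
proof -
  obtain a where a: "0 < a" "a < 1" and le: "mat_le (MP_inverse U2) (a \<cdot>\<^sub>m MP_inverse U1)"
    using mat_gt_imp_mat_le_smult[OF assms(8)] by blast
  have "rho (MP_inverse U1 * V1) < rho (MP_inverse U2 * V2)"
    using assms(5) rho_less_of_splittings_I_II[OF assms(3,1,2,4) _ _ assms(6,8) _ a(2) le]
      rho_less_of_splittings_II_I[OF assms(3,1,2,4) _ _ assms(6,8) _ a(2) le] a(1)
    by auto
  with a le assms(7) show ?thesis unfolding convergent_splitting_def by blast
qed

end
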